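(* Let $G$ be a finite group whose Sylow $2$-subgroups are isomorphic to $D_{2n}$ for some integer $n\ge 2$, and let $H$ be a $2$-subgroup of $G$. Then $H$ is not a perfect code of $G$ if and only if there exists a cyclic $2$-subgroup $C$ of $G$ such that $1<H<C$.
   Context: $D_{2n}$ denotes the dihedral group of order $2n$, with $D_4=C_2\times C_2$. For a group $G$ with identity $e$ and an inverse-closed subset $S\subseteq G\setminus\{e\}$, the Cayley graph $\mathrm{Cay}(G,S)$ has vertex set $G$ and edges $\{g,sg\}$ for $s\in S$, $g\in G$. A perfect code in a graph is an independent set $C$ of vertices such that every vertex outside $C$ is adjacent to exactly one vertex of $C$. A subgroup $H$ of $G$ is a perfect code of $G$ if some Cayley graph of $G$ admits $H$ as a perfect code. *)

theory Defs
  imports "HOL-Algebra.Algebra"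
begin

text \<open>The element (i, False) stands for r^i and
  (i, True) for r^i s, where r has order n, s has order 2 and s r s = r^-1.
  For n = 2 this is C2 x C2, matching the convention D_4 = C2 x C2.\<close>
definition dihedral_group :: "nat \<Rightarrow> (nat \<times> bool) monoid" where
  "dihedral_group n =
     \<lparr> carrier = {0..<n} \<times> UNIV,
       monoid.mult = (\<lambda>(i, e) (j, f). ((if e then i + n - j else i + j) mod n, e \<noteq> f)),
       monoid.one = (0, False) \<rparr>"

definition is_p_subgroup :: "nat \<Rightarrow> ('a, 'b) monoid_scheme \<Rightarrow> 'a set \<Rightarrow> bool" where
  "is_p_subgroup p G H \<longleftrightarrow> subgroup H G \<and> (\<exists>k. card H = p ^ k)"

definition is_sylow_subgroup :: "nat \<Rightarrow> ('a, 'b) monoid_scheme \<Rightarrow> 'a set \<Rightarrow> bool" where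
  "is_sylow_subgroup p G P \<longleftrightarrow> subgroup P G \<and>
     (\<exists>k. card P = p ^ k \<and> p ^ k dvd order G \<and> \<not> p ^ Suc k dvd order G)"

definition cayley_adj :: "('a, 'b) monoid_scheme \<Rightarrow> 'a set \<Rightarrow> 'a \<Rightarrow> 'a \<Rightarrow> bool" where
  "cayley_adj G S g h \<longleftrightarrow> g \<in> carrier G \<and> h \<in> carrier G \<and> (\<exists>s\<in>S. h = s \<otimes>\<^bsub>G\<^esub> g)"

definition perfect_code_in_cayley :: "('a, 'b) monoid_scheme \<Rightarrow> 'a set \<Rightarrow> 'a set \<Rightarrow> bool" where
  "perfect_code_in_cayley G S C \<longleftrightarrow> C \<subseteq> carrier G \<and>
     (\<forall>x\<in>C. \<forall>y\<in>C. \<not> cayley_adj G S x y) \<and>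
     (\<forall>v\<in>carrier G - C. \<exists>!c. c \<in> C \<and> cayley_adj G S v c)"

definition subgroup_perfect_code :: "('a, 'b) monoid_scheme \<Rightarrow> 'a set \<Rightarrow> bool" where
  "subgroup_perfect_code G H \<longleftrightarrow>
     (\<exists>S. S \<subseteq> carrier G - {\<one>\<^bsub>G\<^esub>} \<and> (\<forall>s\<in>S. inv\<^bsub>G\<^esub> s \<in> S) \<and>
          perfect_code_in_cayley G S H)"

end

theory Submission
  imports Defs
begin

text \<open>
  For a 2-subgroup \<open>H\<close> of a finite group, being a perfect code is a local condition: \<open>H\<close> is a
  perfect code iff every \<open>g \<notin> H\<close> that normalises \<open>H\<close> and squares into \<open>H\<close> has an involution
  or the identity in its coset \<open>gH\<close>. An inverse-closed set meeting every right coset of \<open>H\<close>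
  outside \<open>H\<close> exactly once is a connection set for which \<open>H\<close> is a perfect code, and such a set
  is built inside each union \<open>HxH \<union> Hx\<inverse>H\<close>: the number of right cosets of \<open>H\<close> in \<open>HxH\<close>
  divides \<open>|H|\<close>, so either it is even and the cosets can be paired off by mutually inverse
  elements, or it is 1 and \<open>x\<close> is one of the elements the condition speaks about.

  If \<open>1 < H < C\<close> with \<open>C\<close> cyclic, a square root in \<open>C\<close> of a generator of \<open>H\<close> violates the
  condition, because the elements of order at most 2 of \<open>C\<close> already lie in \<open>H\<close>. Conversely, if
  \<open>g\<close> violates it, \<open>H \<union> gH\<close> is a 2-subgroup and so lies in a Sylow 2-subgroup \<open>P \<cong> D\<^sub>2\<^sub>n\<close>.
  The reflections of \<open>P\<close> are involutions, so \<open>gH\<close> consists of rotations and \<open>H\<close> is a proper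
  subgroup of the cyclic rotation subgroup, whose order \<open>n\<close> is a power of 2.
\<close>

lemma (in group) inv_mult_cancel_left [simp]:
  "x \<in> carrier G \<Longrightarrow> y \<in> carrier G \<Longrightarrow> inv x \<otimes> (x \<otimes> y) = y"
  by (metis inv_closed l_inv l_one m_assoc)

lemma (in group) mult_inv_cancel_left [simp]:
  "x \<in> carrier G \<Longrightarrow> y \<in> carrier G \<Longrightarrow> x \<otimes> (inv x \<otimes> y) = y"
  by (metis inv_closed r_inv l_one m_assoc)

lemma (in group) group_actionI:
  assumes closed: "\<And>g x. g \<in> carrier G \<Longrightarrow> x \<in> E \<Longrightarrow> act g x \<in> E"
    and one: "\<And>x. x \<in> E \<Longrightarrow> act \<one> x = x"
    and mult: "\<And>g h x. g \<in> carrier G \<Longrightarrow> h \<in> carrier G \<Longrightarrow> x \<in> E \<Longrightarrow> act (g \<otimes> h) x = act g (act h x)"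
  shows "group_action G E (\<lambda>g. \<lambda>x\<in>E. act g x)"
proof -
  have inv_act: "act (inv g) (act g x) = x" "act g (act (inv g) x) = x"
    if "g \<in> carrier G" "x \<in> E" for g x
    using that mult[of "inv g" g x] mult[of g "inv g" x] by (simp_all add: one)
  have bij: "(\<lambda>x\<in>E. act g x) \<in> Bij E" if g: "g \<in> carrier G" for g
  proof -
    have "bij_betw (act g) E E"
      by (rule bij_betwI[where g = "act (inv g)"]) (simp_all add: g closed inv_act)
    thus ?thesis unfolding Bij_def by simp
  qed
  have "(\<lambda>g. \<lambda>x\<in>E. act g x) \<in> hom G (BijGroup E)"
  proof (rule homI)
    show "(\<lambda>x\<in>E. act g x) \<in> carrier (BijGroup E)" if "g \<in> carrier G" for g
      using bij[OF that] by (simp add: BijGroup_def)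
    show "(\<lambda>x\<in>E. act (g \<otimes> h) x) = (\<lambda>x\<in>E. act g x) \<otimes>\<^bsub>BijGroup E\<^esub> (\<lambda>x\<in>E. act h x)"
      if "g \<in> carrier G" "h \<in> carrier G" for g h
      using that bij closed by (simp add: BijGroup_def compose_def mult restrict_def fun_eq_iff)
  qed
  thus ?thesis
    unfolding group_action_def group_hom_def group_hom_axioms_def
    using group_BijGroup is_group by blast
qed

lemma (in group) rcosets_action:
  assumes "subgroup K G"
  shows "group_action G (rcosets K) (\<lambda>g. \<lambda>S\<in>rcosets K. S #> inv g)"
proof (rule group_actionI)
  have K: "K \<subseteq> carrier G" using subgroup.subset[OF assms] .
  fix S assume "S \<in> rcosets K"
  then obtain x where x: "x \<in> carrier G" "S = K #> x" unfolding RCOSETS_def by blast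
  show "S #> inv g \<in> rcosets K" if "g \<in> carrier G" for g
    using x K that by (simp add: coset_mult_assoc rcosetsI)
  show "S #> inv \<one> = S"
    using x K by (simp add: coset_mult_assoc)
  show "S #> inv (g \<otimes> h) = S #> inv h #> inv g" if "g \<in> carrier G" "h \<in> carrier G" for g h
    using x K that by (simp add: coset_mult_assoc inv_mult_group m_assoc)
qed

lemma (in group_action) p_group_fixed_point:
  assumes "Factorial_Ring.prime p" and "order G = p ^ a" and "finite E" and "\<not> p dvd card E"
  shows "\<exists>x\<in>E. \<forall>g\<in>carrier G. \<phi> g x = x"
proof (rule ccontr)
  assume no_fixed: "\<not> ?thesis"
  have "p dvd card orb" if orb: "orb \<in> orbits G E \<phi>" for orb
  proof -
    obtain x where x: "x \<in> E" "orb = orbit G \<phi> x"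
      using orb unfolding orbits_def by blast
    have "card orb dvd p ^ a"
      using orbit_stabilizer_theorem[OF x(1)] x(2) assms(2) by (metis dvd_triv_left)
    then obtain i where i: "card orb = p ^ i"
      using assms(1) by (auto simp: divides_primepow_nat)
    have "orb \<noteq> {x}"
    proof
      assume "orb = {x}"
      hence "\<phi> g x = x" if "g \<in> carrier G" for g
        using x that unfolding orbit_def by blast
      thus False using no_fixed x(1) by blast
    qed
    hence "card orb \<noteq> 1"
      using orbit_refl[OF x(1)] x(2) by (metis card_1_singletonE singletonD)
    hence "i \<noteq> 0" using i by auto
    thus ?thesis using i by (simp add: dvd_power)
  qed
  hence "p dvd (\<Sum>orb\<in>orbits G E \<phi>. card orb)"
    by (simp add: dvd_sum)
  also have "(\<Sum>orb\<in>orbits G E \<phi>. card orb) = card E"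
    using disjoint_sum[OF assms(3), of "\<lambda>_. 1 :: nat"] by simp
  finally show False using assms(4) by simp
qed

lemma (in group) sylow_subgroup_exists:
  assumes "finite (carrier G)" and "Factorial_Ring.prime p"
  shows "\<exists>P. is_sylow_subgroup p G P"
proof -
  define a where "a = multiplicity p (order G)"
  have "p ^ a dvd order G"
    unfolding a_def by (rule multiplicity_dvd)
  then obtain m where m: "order G = p ^ a * m" by (elim dvdE)
  obtain P where "subgroup P G" "card P = p ^ a"
    using sylow_thm[of p G a m] assms m is_group by auto
  moreover have "\<not> p ^ Suc a dvd order G"
    using assms prime_gt_1_nat[OF assms(2)]
      power_dvd_iff_le_multiplicity[where p = p and n = "Suc a" and x = "order G"]
    unfolding a_def by (simp add: order_gt_0_iff_finite)
  ultimately show ?thesis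
    unfolding is_sylow_subgroup_def using \<open>p ^ a dvd order G\<close> by blast
qed

lemma (in group) card_conjugate:
  assumes "x \<in> carrier G" and "P \<subseteq> carrier G"
  shows "card (inv x <# P #> x) = card P"
proof -
  have "inv x <# P #> x = (\<lambda>p. inv x \<otimes> p \<otimes> x) ` P"
    by (auto simp: l_coset_def r_coset_def)
  moreover have "inj_on (\<lambda>p. inv x \<otimes> p \<otimes> x) P"
    using assms by (auto simp: inj_on_def subsetD)
  ultimately show ?thesis by (simp add: card_image)
qed

lemma (in group) p_subgroup_le_sylow:
  assumes "finite (carrier G)" and "Factorial_Ring.prime p" and "is_p_subgroup p G Q"
  shows "\<exists>P. is_sylow_subgroup p G P \<and> Q \<subseteq> P"
proof -
  obtain P0 k where P0: "subgroup P0 G" "card P0 = p ^ k" "p ^ k dvd order G" "\<not> p ^ Suc k dvd order G"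
    using sylow_subgroup_exists[OF assms(1,2)] unfolding is_sylow_subgroup_def by blast
  obtain a where Q: "subgroup Q G" "card Q = p ^ a"
    using assms(3) unfolding is_p_subgroup_def by blast
  interpret Q_action: group_action "G\<lparr>carrier := Q\<rparr>" "rcosets P0" "\<lambda>g. \<lambda>S\<in>rcosets P0. S #> inv g"
    using group_action.induced_action[OF rcosets_action[OF P0(1)] Q(1)] .
  have index: "\<not> p dvd card (rcosets P0)"
  proof
    assume "p dvd card (rcosets P0)"
    hence "p ^ Suc k dvd card (rcosets P0) * card P0"
      using P0(2) by (simp add: mult_dvd_mono)
    thus False using lagrange[OF P0(1)] P0(4) by simp
  qed
  have "finite (rcosets P0)"
    using assms(1) rcosets_part_G[OF P0(1)] by (metis finite_UnionD)
  moreover have "order (G\<lparr>carrier := Q\<rparr>) = p ^ a"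
    using Q(2) by (simp add: order_def)
  ultimately obtain S where S: "S \<in> rcosets P0" "\<forall>q\<in>Q. S #> inv q = S"
    using Q_action.p_group_fixed_point[OF assms(2) _ _ index, where a = a] by auto
  then obtain x where x: "x \<in> carrier G" "S = P0 #> x"
    unfolding RCOSETS_def by blast
  have "Q \<subseteq> inv x <# P0 #> x"
  proof
    fix q assume q: "q \<in> Q"
    have qG: "q \<in> carrier G" using subgroup.subset[OF Q(1)] q by blast
    have "S #> inv (inv q) = S" using S(2) subgroup.m_inv_closed[OF Q(1) q] by blast
    hence "P0 #> (x \<otimes> q) = P0 #> x"
      using x qG subgroup.subset[OF P0(1)] by (simp add: coset_mult_assoc)
    moreover have "x \<otimes> q \<in> P0 #> (x \<otimes> q)"
      using x qG P0(1) by (simp add: rcos_self)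
    ultimately obtain h where h: "h \<in> P0" "x \<otimes> q = h \<otimes> x"
      unfolding r_coset_def by auto
    have hG: "h \<in> carrier G" using subgroup.subset[OF P0(1)] h(1) by blast
    have "q = inv x \<otimes> h \<otimes> x"
      using h(2) x qG hG by (metis inv_solve_left m_assoc m_closed inv_closed)
    thus "q \<in> inv x <# P0 #> x"
      using h(1) by (auto simp: l_coset_def r_coset_def)
  qed
  moreover have "is_sylow_subgroup p G (inv x <# P0 #> x)"
    unfolding is_sylow_subgroup_def
    using subgroup_conjugation_is_surj1[OF x(1) P0(1)] card_conjugate[OF x(1) subgroup.subset[OF P0(1)]] P0
    by auto
  ultimately show ?thesis by blast
qed

lemma (in group) conj_inv_mem_subgroup:
  assumes H: "subgroup H G" and g: "g \<in> carrier G" "g \<otimes> g \<in> H" "\<forall>h\<in>H. g \<otimes> h \<otimes> inv g \<in> H"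
    and h: "h \<in> H"
  shows "inv g \<otimes> h \<otimes> g \<in> H"
proof -
  have hG: "h \<in> carrier G" using h subgroup.subset[OF H] by blast
  have "inv g \<otimes> h \<otimes> g = inv (g \<otimes> g) \<otimes> (g \<otimes> (h \<otimes> (g \<otimes> g)) \<otimes> inv g)"
    using g(1) hG by (simp add: inv_mult_group m_assoc)
  thus ?thesis using h g(2,3) H by (simp add: subgroup.m_closed subgroup.m_inv_closed)
qed

lemma (in group) subgroup_Un_l_coset:
  assumes H: "subgroup H G" and g: "g \<in> carrier G" "g \<otimes> g \<in> H" "\<forall>h\<in>H. g \<otimes> h \<otimes> inv g \<in> H"
  shows "subgroup (H \<union> (g <# H)) G"
proof -
  interpret H: subgroup H G by (rule H)
  have conj: "inv g \<otimes> h \<otimes> g \<in> H" if "h \<in> H" for h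
    using conj_inv_mem_subgroup[OF H g that] .
  let ?Q = "H \<union> (\<lambda>h. g \<otimes> h) ` H"
  have "subgroup ?Q G"
  proof (rule subgroupI)
    show "?Q \<subseteq> carrier G" using g(1) by (auto simp: H.mem_carrier)
    show "?Q \<noteq> {}" using H.one_closed by blast
  next
    fix a assume "a \<in> ?Q"
    then consider "a \<in> H" | h where "h \<in> H" "a = g \<otimes> h" by blast
    thus "inv a \<in> ?Q"
    proof cases
      case (2 h)
      have "inv a = g \<otimes> ((inv g \<otimes> inv h \<otimes> g) \<otimes> inv (g \<otimes> g))"
        using 2 g(1) by (simp add: inv_mult_group m_assoc H.mem_carrier)
      moreover have "(inv g \<otimes> inv h \<otimes> g) \<otimes> inv (g \<otimes> g) \<in> H"
        using conj 2(1) g(2) by simp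
      ultimately show ?thesis by blast
    qed simp
  next
    fix a b assume "a \<in> ?Q" "b \<in> ?Q"
    then consider "a \<in> H" "b \<in> H"
      | h2 where "a \<in> H" "h2 \<in> H" "b = g \<otimes> h2"
      | h1 where "h1 \<in> H" "a = g \<otimes> h1" "b \<in> H"
      | h1 h2 where "h1 \<in> H" "a = g \<otimes> h1" "h2 \<in> H" "b = g \<otimes> h2"
      by blast
    thus "a \<otimes> b \<in> ?Q"
    proof cases
      case (2 h2)
      have "a \<otimes> b = g \<otimes> ((inv g \<otimes> a \<otimes> g) \<otimes> h2)"
        using 2 g(1) by (simp add: m_assoc H.mem_carrier)
      thus ?thesis using 2 conj by blast
    next
      case (3 h1)
      have "a \<otimes> b = g \<otimes> (h1 \<otimes> b)"
        using 3 g(1) by (simp add: m_assoc H.mem_carrier)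
      thus ?thesis using 3 by blast
    next
      case (4 h1 h2)
      have "a \<otimes> b = (g \<otimes> g) \<otimes> ((inv g \<otimes> h1 \<otimes> g) \<otimes> h2)"
        using 4 g(1) by (simp add: m_assoc H.mem_carrier)
      thus ?thesis using 4 conj g(2) by simp
    qed simp
  qed
  moreover have "g <# H = (\<lambda>h. g \<otimes> h) ` H" by (auto simp: l_coset_def)
  ultimately show ?thesis by simp
qed

lemma (in group) card_Un_l_coset:
  assumes "subgroup H G" "finite H" "g \<in> carrier G" "g \<notin> H"
  shows "card (H \<union> (g <# H)) = 2 * card H"
proof -
  have coset: "g <# H = (\<lambda>h. g \<otimes> h) ` H" by (auto simp: l_coset_def)
  have "g \<otimes> h \<notin> H" if "h \<in> H" for h
  proof
    assume "g \<otimes> h \<in> H"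
    hence "g \<otimes> h \<otimes> inv h \<in> H"
      using that assms(1) by (simp add: subgroup.m_closed subgroup.m_inv_closed)
    moreover have "h \<in> carrier G" using that subgroup.subset[OF assms(1)] by blast
    hence "g \<otimes> h \<otimes> inv h = g" using assms(3) by (simp add: m_assoc)
    ultimately show False using assms(4) by simp
  qed
  hence "H \<inter> (g <# H) = {}" unfolding coset by blast
  moreover have "card (g <# H) = card H"
    using assms(3) subgroup.subset[OF assms(1)] unfolding coset
    by (intro card_image inj_onI) (metis l_cancel subsetD)
  ultimately show ?thesis
    using assms(2) coset by (simp add: card_Un_disjoint)
qed

lemma (in group) subgroup_nat_pow_closed:
  assumes "subgroup H G" and "h \<in> H"
  shows "h [^] (n::nat) \<in> H"
  using subgroup_int_pow_closed[OF assms, of "int n"] assms by (simp add: int_pow_int)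

lemma (in group) subgroup_generated_generate:
  assumes "S \<subseteq> carrier G"
  shows "subgroup_generated G (generate G S) = subgroup_generated G S"
proof -
  have "generate G (carrier G \<inter> generate G S) = generate G (carrier G \<inter> S)"
    using assms generate_in_carrier[OF assms] subgroup.carrier_subgroup_generated_subgroup[OF generate_is_subgroup[OF assms]]
    by (simp add: Int_absorb1 carrier_subgroup_generated)
  thus ?thesis by (simp add: subgroup_generated_def)
qed

section \<open>Double cosets and perfect codes of 2-subgroups\<close>

definition double_coset :: "('a, 'b) monoid_scheme \<Rightarrow> 'a set \<Rightarrow> 'a \<Rightarrow> 'a set" where
  "double_coset G H x = {h1 \<otimes>\<^bsub>G\<^esub> x \<otimes>\<^bsub>G\<^esub> h2 | h1 h2. h1 \<in> H \<and> h2 \<in> H}"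

definition inverse_closed_transversal :: "('a, 'b) monoid_scheme \<Rightarrow> 'a set \<Rightarrow> 'a set \<Rightarrow> 'a set \<Rightarrow> bool" where
  "inverse_closed_transversal G H A T \<longleftrightarrow>
     T \<subseteq> A \<and> (\<forall>t\<in>T. inv\<^bsub>G\<^esub> t \<in> T) \<and> (\<forall>y\<in>A. \<exists>!t. t \<in> T \<and> t \<in> H #>\<^bsub>G\<^esub> y)"

context group
begin

context
  fixes H assumes H: "subgroup H G"
begin

interpretation H: subgroup H G by (rule H)

lemma double_coset_memI: "h1 \<in> H \<Longrightarrow> h2 \<in> H \<Longrightarrow> h1 \<otimes> x \<otimes> h2 \<in> double_coset G H x"
  unfolding double_coset_def by blast

lemma double_coset_memE:
  assumes "y \<in> double_coset G H x"
  obtains h1 h2 where "h1 \<in> H" "h2 \<in> H" "y = h1 \<otimes> x \<otimes> h2"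
  using assms unfolding double_coset_def by blast

lemma double_coset_subset: "x \<in> carrier G \<Longrightarrow> double_coset G H x \<subseteq> carrier G"
  by (auto elim: double_coset_memE)

lemma double_coset_self: "x \<in> carrier G \<Longrightarrow> x \<in> double_coset G H x"
  using double_coset_memI[OF H.one_closed H.one_closed, of x] by simp

lemma double_coset_eq:
  assumes x: "x \<in> carrier G" and y: "y \<in> double_coset G H x"
  shows "double_coset G H y = double_coset G H x"
proof -
  obtain a b where ab: "a \<in> H" "b \<in> H" "y = a \<otimes> x \<otimes> b"
    using y by (rule double_coset_memE)
  have abG: "a \<in> carrier G" "b \<in> carrier G" using ab by (simp_all add: H.mem_carrier)
  show ?thesis
  proof (intro equalityI subsetI)
    fix z assume "z \<in> double_coset G H y"
    then obtain h1 h2 where h: "h1 \<in> H" "h2 \<in> H" "z = h1 \<otimes> y \<otimes> h2"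
      by (rule double_coset_memE)
    hence "z = (h1 \<otimes> a) \<otimes> x \<otimes> (b \<otimes> h2)"
      using ab abG x by (simp add: m_assoc H.mem_carrier)
    thus "z \<in> double_coset G H x" using h ab by (simp add: double_coset_memI)
  next
    fix z assume "z \<in> double_coset G H x"
    then obtain h1 h2 where h: "h1 \<in> H" "h2 \<in> H" "z = h1 \<otimes> x \<otimes> h2"
      by (rule double_coset_memE)
    hence "z = (h1 \<otimes> inv a) \<otimes> y \<otimes> (inv b \<otimes> h2)"
      using ab abG x by (simp add: m_assoc H.mem_carrier)
    thus "z \<in> double_coset G H y" using h ab by (simp add: double_coset_memI)
  qed
qed

lemma inv_mem_double_coset_inv:
  assumes "x \<in> carrier G" and "y \<in> double_coset G H x"
  shows "inv y \<in> double_coset G H (inv x)"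
proof -
  obtain a b where ab: "a \<in> H" "b \<in> H" "y = a \<otimes> x \<otimes> b"
    using assms(2) by (rule double_coset_memE)
  hence "inv y = inv b \<otimes> inv x \<otimes> inv a"
    using assms(1) by (simp add: inv_mult_group m_assoc)
  thus ?thesis using ab by (simp add: double_coset_memI)
qed

lemma rcoset_subset_double_coset:
  assumes "x \<in> carrier G" and "y \<in> double_coset G H x"
  shows "H #> y \<subseteq> double_coset G H x"
proof
  fix z assume "z \<in> H #> y"
  then obtain h where h: "h \<in> H" "z = h \<otimes> y" unfolding r_coset_def by blast
  obtain a b where ab: "a \<in> H" "b \<in> H" "y = a \<otimes> x \<otimes> b"
    using assms(2) by (rule double_coset_memE)
  have "z = (h \<otimes> a) \<otimes> x \<otimes> b" using h ab assms(1) by (simp add: m_assoc)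
  thus "z \<in> double_coset G H x" using h ab by (simp add: double_coset_memI)
qed

lemma Union_rcosets_double_coset:
  assumes "x \<in> carrier G"
  shows "\<Union>((\<lambda>y. H #> y) ` double_coset G H x) = double_coset G H x"
  using rcoset_subset_double_coset[OF assms] rcos_self[OF _ H] double_coset_subset[OF assms] by blast

lemma rcosets_double_coset:
  assumes "x \<in> carrier G"
  shows "(\<lambda>y. H #> y) ` double_coset G H x = (\<lambda>h. H #> (x \<otimes> h)) ` H"
proof -
  have "H #> (a \<otimes> x \<otimes> b) = H #> (x \<otimes> b)" if "a \<in> H" "b \<in> H" for a b
  proof -
    have "H #> (a \<otimes> x \<otimes> b) = H #> a #> (x \<otimes> b)"
      using that assms by (simp add: coset_mult_assoc[OF H.subset] m_assoc H.mem_carrier)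
    thus ?thesis using that by (simp add: coset_join2[OF _ H])
  qed
  thus ?thesis
    using double_coset_memI[OF H.one_closed, of _ x] assms
    by (fastforce elim!: double_coset_memE)
qed

lemma double_coset_disjoint:
  assumes "x \<in> carrier G" "x' \<in> carrier G" "double_coset G H x \<noteq> double_coset G H x'"
  shows "double_coset G H x \<inter> double_coset G H x' = {}"
  using assms double_coset_eq by blast

lemma double_coset_inter_subgroup:
  assumes "x \<in> carrier G" "x \<notin> H"
  shows "double_coset G H x \<inter> H = {}"
proof -
  have "x = inv a \<otimes> (a \<otimes> x \<otimes> b) \<otimes> inv b" if "a \<in> H" "b \<in> H" for a b
    using that assms(1) by (simp add: m_assoc H.mem_carrier)
  hence "a \<otimes> x \<otimes> b \<notin> H" if "a \<in> H" "b \<in> H" for a b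
    using that assms(2) by (metis H.m_closed H.m_inv_closed)
  thus ?thesis by (blast elim: double_coset_memE)
qed

lemma double_coset_inverse_pair:
  assumes x: "x \<in> carrier G" and y: "y \<in> double_coset G H x" and z: "z \<in> double_coset G H (inv x)"
  shows "\<exists>w\<in>H #> y. inv w \<in> H #> z"
proof -
  obtain a b where ab: "a \<in> H" "b \<in> H" "y = a \<otimes> x \<otimes> b"
    using y by (rule double_coset_memE)
  obtain c d where cd: "c \<in> H" "d \<in> H" "z = c \<otimes> inv x \<otimes> d"
    using z by (rule double_coset_memE)
  have G: "a \<in> carrier G" "b \<in> carrier G" "c \<in> carrier G" "d \<in> carrier G"
    using ab cd by (simp_all add: H.mem_carrier)
  define w where "w = inv d \<otimes> x \<otimes> b"
  have "w = (inv d \<otimes> inv a) \<otimes> y"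
    using ab G x by (simp add: w_def m_assoc)
  hence "w \<in> H #> y"
    using ab cd unfolding r_coset_def by (auto intro: H.m_closed H.m_inv_closed)
  moreover have "inv w = (inv b \<otimes> inv c) \<otimes> z"
    using cd G x by (simp add: w_def m_assoc inv_mult_group)
  hence "inv w \<in> H #> z"
    using ab cd unfolding r_coset_def by (auto intro: H.m_closed H.m_inv_closed)
  ultimately show ?thesis by blast
qed

lemma card_double_coset:
  assumes "finite (carrier G)" and x: "x \<in> carrier G"
  shows "card (double_coset G H x) = card H * card ((\<lambda>y. H #> y) ` double_coset G H x)"
proof -
  let ?C = "(\<lambda>y. H #> y) ` double_coset G H x"
  have fin: "finite (double_coset G H x)"
    using finite_subset[OF double_coset_subset[OF x] assms(1)] .
  have "card H * card ?C = card (\<Union>?C)"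
  proof (rule card_partition)
    show "card c = card H" if c: "c \<in> ?C" for c
    proof -
      obtain y where "y \<in> double_coset G H x" "c = H #> y" using c by blast
      hence "c \<in> rcosets H" using double_coset_subset[OF x] H.subset by (auto intro: rcosetsI)
      thus ?thesis using card_rcosets_equal[OF _ H.subset] by simp
    qed
    have "?C \<subseteq> rcosets H"
      using double_coset_subset[OF x] by (auto intro: rcosetsI[OF H.subset])
    thus "c1 \<inter> c2 = {}" if "c1 \<in> ?C" "c2 \<in> ?C" "c1 \<noteq> c2" for c1 c2
      using that rcos_disjoint[OF H] unfolding pairwise_def disjnt_def by blast
  qed (use fin Union_rcosets_double_coset[OF x] in auto)
  thus ?thesis using Union_rcosets_double_coset[OF x] by simp
qed

lemma card_rcosets_double_coset_dvd:
  assumes "x \<in> carrier G"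
  shows "card ((\<lambda>y. H #> y) ` double_coset G H x) dvd card H"
proof -
  interpret H_action: group_action "G\<lparr>carrier := H\<rparr>" "rcosets H" "\<lambda>g. \<lambda>S\<in>rcosets H. S #> inv g"
    using group_action.induced_action[OF rcosets_action[OF H] H] .
  have orbit: "orbit (G\<lparr>carrier := H\<rparr>) (\<lambda>g. \<lambda>S\<in>rcosets H. S #> inv g) (H #> x)
      = (\<lambda>h. H #> (x \<otimes> h)) ` H"
  proof -
    have "H #> x #> inv h = H #> (x \<otimes> inv h)" if "h \<in> H" for h
      using that assms by (simp add: coset_mult_assoc[OF H.subset] H.mem_carrier)
    hence "orbit (G\<lparr>carrier := H\<rparr>) (\<lambda>g. \<lambda>S\<in>rcosets H. S #> inv g) (H #> x)
        = (\<lambda>h. H #> (x \<otimes> inv h)) ` H"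
      using rcosetsI[OF H.subset assms] unfolding orbit_def by auto
    also have "\<dots> = (\<lambda>h. H #> (x \<otimes> h)) ` ((\<lambda>h. inv h) ` H)"
      by (simp add: image_image)
    also have "(\<lambda>h. inv h) ` H = H"
      using H.m_inv_closed by (force simp: H.mem_carrier intro: image_eqI[where x = "inv h" for h])
    finally show ?thesis .
  qed
  have "card (orbit (G\<lparr>carrier := H\<rparr>) (\<lambda>g. \<lambda>S\<in>rcosets H. S #> inv g) (H #> x))
      dvd order (G\<lparr>carrier := H\<rparr>)"
    using H_action.orbit_stabilizer_theorem[OF rcosetsI[OF H.subset assms]] by (metis dvd_triv_left)
  thus ?thesis
    using orbit rcosets_double_coset[OF assms] by (simp add: order_def)
qed

lemma card_rcosets_double_coset_inv:
  assumes "finite (carrier G)" and x: "x \<in> carrier G"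
  shows "card ((\<lambda>y. H #> y) ` double_coset G H (inv x)) = card ((\<lambda>y. H #> y) ` double_coset G H x)"
proof -
  have "(\<lambda>y. inv y) ` double_coset G H x = double_coset G H (inv x)"
  proof (intro equalityI subsetI)
    fix z assume "z \<in> double_coset G H (inv x)"
    hence "inv z \<in> double_coset G H x" "z \<in> carrier G"
      using inv_mem_double_coset_inv[of "inv x" z] double_coset_subset[of "inv x"] x by auto
    thus "z \<in> (\<lambda>y. inv y) ` double_coset G H x"
      by (metis image_eqI inv_inv)
  qed (use inv_mem_double_coset_inv[OF x] in blast)
  moreover have "inj_on (\<lambda>y. inv y) (double_coset G H x)"
    using double_coset_subset[OF x] by (auto intro: inj_onI simp: subset_iff)
  ultimately have "card (double_coset G H (inv x)) = card (double_coset G H x)"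
    by (metis card_image)
  moreover have "card H \<noteq> 0"
    using finite_subset[OF H.subset assms(1)] H.one_closed by (metis card_0_eq empty_iff)
  ultimately show ?thesis
    using card_double_coset[OF assms] card_double_coset[OF assms(1) inv_closed[OF x]] by simp
qed

lemma double_coset_single_rcoset:
  assumes x: "x \<in> carrier G"
    and self_inverse: "double_coset G H (inv x) = double_coset G H x"
    and single: "card ((\<lambda>y. H #> y) ` double_coset G H x) = 1"
  shows "double_coset G H x = H #> x" and "x \<otimes> x \<in> H" and "\<forall>h\<in>H. x \<otimes> h \<otimes> inv x \<in> H"
proof -
  have "(\<lambda>y. H #> y) ` double_coset G H x = {H #> x}"
    using single double_coset_self[OF x] by (metis card_1_singletonE image_eqI singletonD)
  thus D: "double_coset G H x = H #> x"
    using Union_rcosets_double_coset[OF x] by simp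
  have "inv x \<in> H #> x"
    using double_coset_self[of "inv x"] x self_inverse D by simp
  then obtain h where h: "h \<in> H" "inv x = h \<otimes> x" unfolding r_coset_def by blast
  hence "x \<otimes> x = inv h"
    using x by (metis H.mem_carrier inv_closed inv_mult_group inv_inv m_closed r_inv inv_solve_right)
  thus "x \<otimes> x \<in> H" using h(1) by simp
  show "\<forall>h\<in>H. x \<otimes> h \<otimes> inv x \<in> H"
  proof
    fix h assume h: "h \<in> H"
    have "x \<otimes> h \<in> H #> x"
      using double_coset_memI[OF H.one_closed h, of x] x D by simp
    then obtain h' where h': "h' \<in> H" "x \<otimes> h = h' \<otimes> x" unfolding r_coset_def by blast
    hence "x \<otimes> h \<otimes> inv x = h'"
      using x by (simp add: m_assoc H.mem_carrier)
    thus "x \<otimes> h \<otimes> inv x \<in> H" using h' by simp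
  qed
qed

lemma inverse_closed_transversal_of_choice:
  assumes "\<C> \<subseteq> rcosets H"
    and "\<And>c. c \<in> \<C> \<Longrightarrow> \<tau> c \<in> c"
    and "\<And>c. c \<in> \<C> \<Longrightarrow> inv (\<tau> c) \<in> \<tau> ` \<C>"
  shows "inverse_closed_transversal G H (\<Union>\<C>) (\<tau> ` \<C>)"
  unfolding inverse_closed_transversal_def
proof (intro conjI ballI)
  show "\<tau> ` \<C> \<subseteq> \<Union>\<C>" using assms(2) by blast
  show "inv t \<in> \<tau> ` \<C>" if "t \<in> \<tau> ` \<C>" for t using that assms(3) by blast
  fix y assume "y \<in> \<Union>\<C>"
  then obtain c where c: "c \<in> \<C>" "y \<in> c" by blast
  have same_coset: "H #> y = c" if cy: "c \<in> \<C>" "y \<in> c" for c y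
  proof -
    obtain a where a: "a \<in> carrier G" "c = H #> a"
      using cy(1) assms(1) unfolding RCOSETS_def by blast
    thus ?thesis using repr_independence[OF _ a(1) H] cy(2) by simp
  qed
  have disjoint: "c1 = c2" if "c1 \<in> \<C>" "c2 \<in> \<C>" "t \<in> c1" "t \<in> c2" for c1 c2 t
    using that assms(1) rcos_disjoint[OF H] unfolding pairwise_def disjnt_def by blast
  show "\<exists>!t. t \<in> \<tau> ` \<C> \<and> t \<in> H #> y"
  proof (rule ex1I[of _ "\<tau> c"])
    show "\<tau> c \<in> \<tau> ` \<C> \<and> \<tau> c \<in> H #> y"
      using c assms(2) same_coset by blast
    show "t = \<tau> c" if "t \<in> \<tau> ` \<C> \<and> t \<in> H #> y" for t
      using that c assms(2) same_coset disjoint by blast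
  qed
qed

lemma inverse_closed_transversal_of_pairing:
  assumes "L \<union> L' \<subseteq> rcosets H" and "L \<inter> L' = {}" and \<sigma>: "bij_betw \<sigma> L L'"
    and pair: "\<And>c. c \<in> L \<Longrightarrow> \<exists>w\<in>c. inv w \<in> \<sigma> c"
  shows "\<exists>T. inverse_closed_transversal G H (\<Union>(L \<union> L')) T"
proof -
  define w where "w c = (SOME w. w \<in> c \<and> inv w \<in> \<sigma> c)" for c
  have w: "w c \<in> c" "inv (w c) \<in> \<sigma> c" if "c \<in> L" for c
    using someI_ex[OF pair[OF that, unfolded Bex_def]] unfolding w_def by blast+
  have wG: "w c \<in> carrier G" if "c \<in> L" for c
    using w(1)[OF that] that assms(1) unfolding RCOSETS_def
    by (auto dest!: subsetD[OF r_coset_subset_G[OF H.subset]])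
  define \<tau> where "\<tau> c = (if c \<in> L then w c else inv (w (inv_into L \<sigma> c)))" for c
  have preimage: "inv_into L \<sigma> c \<in> L" "\<sigma> (inv_into L \<sigma> c) = c" if "c \<in> L'" for c
    using that \<sigma> by (auto simp: bij_betw_def inv_into_into f_inv_into_f)
  have "inverse_closed_transversal G H (\<Union>(L \<union> L')) (\<tau> ` (L \<union> L'))"
  proof (rule inverse_closed_transversal_of_choice[OF assms(1)])
    fix c assume c: "c \<in> L \<union> L'"
    show "\<tau> c \<in> c"
      using c w preimage assms(2) unfolding \<tau>_def by (metis IntI Un_iff empty_iff)
    show "inv (\<tau> c) \<in> \<tau> ` (L \<union> L')"
    proof (cases "c \<in> L")
      case True
      have "\<sigma> c \<in> L'" "\<sigma> c \<notin> L" "inv_into L \<sigma> (\<sigma> c) = c"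
        using True \<sigma> assms(2) by (auto simp: bij_betw_def)
      hence "\<tau> (\<sigma> c) = inv (\<tau> c)" using True unfolding \<tau>_def by simp
      thus ?thesis using \<open>\<sigma> c \<in> L'\<close> by (metis UnI2 image_eqI)
    next
      case False
      hence "c \<in> L'" using c by blast
      hence "\<tau> (inv_into L \<sigma> c) = inv (\<tau> c)"
        using False preimage wG unfolding \<tau>_def by simp
      thus ?thesis using preimage \<open>c \<in> L'\<close> by (metis UnI1 image_eqI)
    qed
  qed
  thus ?thesis by blast
qed

lemma inverse_closed_transversal_double_coset:
  assumes fin: "finite (carrier G)" and "card H = 2 ^ k"
    and x: "x \<in> carrier G" "x \<notin> H"
    and involution: "x \<otimes> x \<in> H \<Longrightarrow> \<forall>h\<in>H. x \<otimes> h \<otimes> inv x \<in> H \<Longrightarrow>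
      \<exists>h\<in>H. (x \<otimes> h) \<otimes> (x \<otimes> h) = \<one>"
  shows "\<exists>T. inverse_closed_transversal G H (double_coset G H x \<union> double_coset G H (inv x)) T"
proof -
  let ?D = "double_coset G H x" and ?D' = "double_coset G H (inv x)"
  let ?R = "(\<lambda>y. H #> y) ` ?D" and ?R' = "(\<lambda>y. H #> y) ` ?D'"
  have ix: "inv x \<in> carrier G" using x(1) by simp
  have R: "?R \<union> ?R' \<subseteq> rcosets H"
    using double_coset_subset[OF x(1)] double_coset_subset[OF ix] by (auto intro: rcosetsI[OF H.subset])
  have Union: "\<Union>(?R \<union> ?R') = ?D \<union> ?D'"
    using Union_rcosets_double_coset[OF x(1)] Union_rcosets_double_coset[OF ix]
    by (simp only: Union_Un_distrib)
  have finite_R: "finite ?R"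
    using finite_subset[OF double_coset_subset[OF x(1)] fin] by simp
  have pairing: "\<exists>T. inverse_closed_transversal G H (?D \<union> ?D') T"
    if L: "L \<union> L' = ?R \<union> ?R'" "L \<inter> L' = {}" "L \<subseteq> ?R" "L' \<subseteq> ?R'" "card L = card L'" for L L'
  proof -
    have "finite L" using finite_subset[OF L(3) finite_R] .
    moreover have "finite L'"
      using L(4) finite_subset[OF double_coset_subset[OF ix] fin] by (metis finite_imageI finite_subset)
    ultimately obtain \<sigma> where \<sigma>: "bij_betw \<sigma> L L'"
      using L(5) finite_same_card_bij by blast
    have "\<exists>w\<in>c. inv w \<in> \<sigma> c" if "c \<in> L" for c
    proof -
      obtain y where "y \<in> ?D" "c = H #> y" using \<open>c \<in> L\<close> L(3) by blast
      moreover obtain z where "z \<in> ?D'" "\<sigma> c = H #> z"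
        using bij_betw_apply[OF \<sigma> \<open>c \<in> L\<close>] L(4) by blast
      ultimately show ?thesis using double_coset_inverse_pair[OF x(1)] by simp
    qed
    thus ?thesis
      using inverse_closed_transversal_of_pairing[OF _ L(2) \<sigma>] R L(1) Union by auto
  qed
  have "card ?R dvd 2 ^ k"
    using card_rcosets_double_coset_dvd[OF x(1)] assms(2) by simp
  then obtain e where e: "card ?R = 2 ^ e" by (auto simp: divides_primepow_nat)
  consider (distinct) "?D' \<noteq> ?D" | (single) "?D' = ?D" "card ?R = 1" | (even) "?D' = ?D" "even (card ?R)"
    using e by (cases e) auto
  thus ?thesis
  proof cases
    case distinct
    have "?D \<inter> ?D' = {}"
      using double_coset_disjoint[OF x(1) ix] distinct by blast
    hence "?R \<inter> ?R' = {}"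
      using rcos_self[OF _ H] double_coset_subset[OF x(1)]
        rcoset_subset_double_coset[OF x(1)] rcoset_subset_double_coset[OF ix] by blast
    thus ?thesis
      using pairing[of ?R ?R'] card_rcosets_double_coset_inv[OF fin x(1)] by simp
  next
    case single
    note D = double_coset_single_rcoset[OF x(1) single]
    obtain h where h: "h \<in> H" "(x \<otimes> h) \<otimes> (x \<otimes> h) = \<one>"
      using involution D(2,3) by blast
    have xhG: "x \<otimes> h \<in> carrier G" using x(1) h(1) by (simp add: H.mem_carrier)
    have "inverse_closed_transversal G H (\<Union>{H #> x}) ((\<lambda>_. x \<otimes> h) ` {H #> x})"
    proof (rule inverse_closed_transversal_of_choice)
      show "{H #> x} \<subseteq> rcosets H" using rcosetsI[OF H.subset x(1)] by simp
      show "x \<otimes> h \<in> c" if "c \<in> {H #> x}" for c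
        using that D(1) double_coset_memI[OF H.one_closed h(1), of x] x(1) by simp
      show "inv (x \<otimes> h) \<in> (\<lambda>_. x \<otimes> h) ` {H #> x}"
        using inv_equality[OF h(2) xhG xhG] by simp
    qed
    thus ?thesis using D(1) single(1) by auto
  next
    case even
    obtain A where A: "A \<subseteq> ?R" "card A = card ?R div 2"
      by (rule obtain_subset_with_card_n[of "card ?R div 2" ?R]) simp_all
    have "card (?R - A) = card A"
      using A finite_R even(2) by (auto simp: card_Diff_subset finite_subset elim!: evenE)
    moreover have "A \<union> (?R - A) = ?R \<union> ?R'" using A(1) even(1) by auto
    ultimately show ?thesis
      using pairing[of A "?R - A"] A(1) even(1) by simp
  qed
qed

lemma inv_mem_carrier_diff: "x \<in> carrier G - H \<Longrightarrow> inv x \<in> carrier G - H"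
  by (metis Diff_iff H.m_inv_closed inv_closed inv_inv)

lemma inverse_closed_transversal_of_double_cosets:
  assumes local: "\<And>x. x \<in> carrier G - H \<Longrightarrow>
    \<exists>T. inverse_closed_transversal G H (double_coset G H x \<union> double_coset G H (inv x)) T"
  shows "\<exists>S. inverse_closed_transversal G H (carrier G - H) S"
proof -
  define E where "E x = double_coset G H x \<union> double_coset G H (inv x)" for x
  (* Choosing T as a function of the set E x rather than of x makes the choices coherent:
     all x with the same E x use the same transversal. *)
  define T where "T A = (SOME T. inverse_closed_transversal G H A T)" for A
  have T: "T (E x) \<subseteq> E x" "\<And>t. t \<in> T (E x) \<Longrightarrow> inv t \<in> T (E x)"
    "\<And>y. y \<in> E x \<Longrightarrow> \<exists>!t. t \<in> T (E x) \<and> t \<in> H #> y"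
    if "x \<in> carrier G - H" for x
    using someI_ex[OF local[OF that]] unfolding T_def E_def inverse_closed_transversal_def by blast+
  have E_sub: "E x \<subseteq> carrier G - H" if "x \<in> carrier G - H" for x
  proof -
    have "double_coset G H z \<subseteq> carrier G - H" if "z \<in> carrier G - H" for z
      using that double_coset_subset double_coset_inter_subgroup by blast
    thus ?thesis
      using that inv_mem_carrier_diff unfolding E_def by blast
  qed
  have E_self: "x \<in> E x" if "x \<in> carrier G" for x
    using double_coset_self[OF that] unfolding E_def by blast
  have E_eq: "E y = E x" if x: "x \<in> carrier G" and y: "y \<in> E x" for x y
  proof (cases "y \<in> double_coset G H x")
    case True
    thus ?thesis using double_coset_eq[OF x True]
        double_coset_eq[OF inv_closed[OF x] inv_mem_double_coset_inv[OF x True]]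
      unfolding E_def by simp
  next
    case False
    hence y': "y \<in> double_coset G H (inv x)" using y unfolding E_def by blast
    thus ?thesis using double_coset_eq[OF inv_closed[OF x] y']
        double_coset_eq[OF x] inv_mem_double_coset_inv[OF inv_closed[OF x] y'] x
      unfolding E_def by auto
  qed
  define S where "S = (\<Union>x\<in>carrier G - H. T (E x))"
  have S_in_T: "s \<in> T (E y)" if s: "s \<in> S" "s \<in> H #> y" and y: "y \<in> carrier G - H" for s y
  proof -
    obtain x where x: "x \<in> carrier G - H" "s \<in> T (E x)" using s(1) unfolding S_def by blast
    have "s \<in> E x" using T(1)[OF x(1)] x(2) by blast
    hence "E s = E x" using E_eq x(1) by blast
    moreover have "s \<in> E y"
      using s(2) rcoset_subset_double_coset[OF _ double_coset_self] y unfolding E_def by blast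
    hence "E s = E y" using E_eq y by blast
    ultimately show ?thesis using x(2) by simp
  qed
  have "inverse_closed_transversal G H (carrier G - H) S"
    unfolding inverse_closed_transversal_def
  proof (intro conjI ballI)
    show "S \<subseteq> carrier G - H"
      using T(1) E_sub unfolding S_def by blast
    show "inv s \<in> S" if "s \<in> S" for s
      using that T(2) unfolding S_def by blast
    fix y assume y: "y \<in> carrier G - H"
    have "\<exists>!t. t \<in> T (E y) \<and> t \<in> H #> y"
      using T(3)[OF y] E_self y by blast
    moreover have "T (E y) \<subseteq> S" using y unfolding S_def by blast
    ultimately show "\<exists>!t. t \<in> S \<and> t \<in> H #> y"
      using S_in_T[OF _ _ y] by blast
  qed
  thus ?thesis by blast
qed

lemma perfect_code_of_inverse_closed_transversal:
  assumes "inverse_closed_transversal G H (carrier G - H) S"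
  shows "subgroup_perfect_code G H"
proof -
  have S: "S \<subseteq> carrier G - H" "\<And>s. s \<in> S \<Longrightarrow> inv s \<in> S"
    and unique: "\<And>y. y \<in> carrier G - H \<Longrightarrow> \<exists>!s. s \<in> S \<and> s \<in> H #> y"
    using assms unfolding inverse_closed_transversal_def by auto
  have adj_iff: "cayley_adj G S v c \<longleftrightarrow> (\<exists>s. s \<in> S \<and> s \<in> H #> inv v \<and> c = s \<otimes> v)"
    if "v \<in> carrier G" "c \<in> H" for v c
  proof -
    have "s = c \<otimes> inv v \<longleftrightarrow> c = s \<otimes> v" if "s \<in> carrier G" for s
      using that \<open>v \<in> carrier G\<close> \<open>c \<in> H\<close> by (auto simp: m_assoc H.mem_carrier)
    thus ?thesis
      using that S(1) unfolding cayley_adj_def r_coset_def by (auto simp: H.mem_carrier)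
  qed
  show ?thesis
    unfolding subgroup_perfect_code_def perfect_code_in_cayley_def
  proof (intro exI conjI ballI)
    show "S \<subseteq> carrier G - {\<one>}" using S(1) H.one_closed by blast
    show "inv s \<in> S" if "s \<in> S" for s using S(2) that .
    show "H \<subseteq> carrier G" by (rule H.subset)
    show "\<not> cayley_adj G S a b" if "a \<in> H" "b \<in> H" for a b
    proof
      assume "cayley_adj G S a b"
      then obtain s where "s \<in> S" "s \<in> H #> inv a"
        using adj_iff \<open>a \<in> H\<close> \<open>b \<in> H\<close> H.mem_carrier by blast
      moreover have "H #> inv a = H"
        using \<open>a \<in> H\<close> by (simp add: coset_join2[OF _ H] H.mem_carrier)
      ultimately show False using S(1) by blast
    qed
    fix v assume v: "v \<in> carrier G - H"
    hence "inv v \<in> carrier G - H" by (rule inv_mem_carrier_diff)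
    then obtain s where s: "s \<in> S" "s \<in> H #> inv v" and s_unique: "\<And>s'. s' \<in> S \<Longrightarrow> s' \<in> H #> inv v \<Longrightarrow> s' = s"
      using unique by blast
    have "s \<otimes> v \<in> H"
      using s(2) v unfolding r_coset_def by (auto simp: m_assoc H.mem_carrier)
    thus "\<exists>!c. c \<in> H \<and> cayley_adj G S v c"
      using adj_iff v s s_unique by (metis Diff_iff)
  qed
qed

lemma coset_involution_of_perfect_code:
  assumes "subgroup_perfect_code G H"
    and g: "g \<in> carrier G - H" "g \<otimes> g \<in> H" and normalises: "\<forall>h\<in>H. g \<otimes> h \<otimes> inv g \<in> H"
  shows "\<exists>h\<in>H. (g \<otimes> h) \<otimes> (g \<otimes> h) = \<one>"
proof -
  obtain S where S: "S \<subseteq> carrier G - {\<one>}" "\<forall>s\<in>S. inv s \<in> S"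
    and code: "perfect_code_in_cayley G S H"
    using assms(1) unfolding subgroup_perfect_code_def by blast
  have unique: "\<exists>!c. c \<in> H \<and> cayley_adj G S v c" if "v \<in> carrier G - H" for v
    using code that unfolding perfect_code_in_cayley_def by blast
  have gG: "g \<in> carrier G" using g(1) by blast
  have conj_inv: "inv g \<otimes> h \<otimes> g \<in> H" if "h \<in> H" for h
    using conj_inv_mem_subgroup[OF H gG g(2) normalises that] .
  (* The neighbour c of inv g in H gives s = c g in S; then s g and inv s g are both
     neighbours of g in H, so s = inv s. *)
  obtain c where c: "c \<in> H" "cayley_adj G S (inv g) c"
    using unique[OF inv_mem_carrier_diff[OF g(1)]] by blast
  then obtain s where s: "s \<in> S" "c = s \<otimes> inv g" unfolding cayley_adj_def by blast
  have sG: "s \<in> carrier G" using s(1) S(1) by blast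
  have s_eq: "s = g \<otimes> (inv g \<otimes> c \<otimes> g)"
    using s(2) sG gG by (simp add: m_assoc)
  have "s \<otimes> g \<in> H" "inv s \<otimes> g \<in> H"
    using s_eq gG c(1) g(2) conj_inv[OF H.m_inv_closed[OF c(1)]]
    by (simp_all add: m_assoc inv_mult_group H.mem_carrier H.m_closed)
  moreover have "cayley_adj G S g (s \<otimes> g)" "cayley_adj G S g (inv s \<otimes> g)"
    using gG sG s(1) S(2) unfolding cayley_adj_def by auto
  ultimately have "s \<otimes> g = inv s \<otimes> g"
    using unique[OF g(1)] by blast
  hence "s \<otimes> s = \<one>"
    using sG gG by (metis inv_closed r_cancel r_inv)
  thus ?thesis
    using s_eq conj_inv[OF c(1)] by (metis m_assoc)
qed

theorem two_subgroup_perfect_code_iff: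
  assumes "finite (carrier G)" and "card H = 2 ^ k"
  shows "subgroup_perfect_code G H \<longleftrightarrow>
    (\<forall>g\<in>carrier G - H. g \<otimes> g \<in> H \<longrightarrow> (\<forall>h\<in>H. g \<otimes> h \<otimes> inv g \<in> H) \<longrightarrow>
      (\<exists>h\<in>H. (g \<otimes> h) \<otimes> (g \<otimes> h) = \<one>))"
proof (intro iffI ballI impI)
  show "\<exists>h\<in>H. (g \<otimes> h) \<otimes> (g \<otimes> h) = \<one>"
    if "subgroup_perfect_code G H" "g \<in> carrier G - H" "g \<otimes> g \<in> H" "\<forall>h\<in>H. g \<otimes> h \<otimes> inv g \<in> H" for g
    using coset_involution_of_perfect_code that by blast
next
  assume "\<forall>g\<in>carrier G - H. g \<otimes> g \<in> H \<longrightarrow> (\<forall>h\<in>H. g \<otimes> h \<otimes> inv g \<in> H) \<longrightarrow>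
      (\<exists>h\<in>H. (g \<otimes> h) \<otimes> (g \<otimes> h) = \<one>)"
  hence "\<exists>T. inverse_closed_transversal G H (double_coset G H x \<union> double_coset G H (inv x)) T"
    if "x \<in> carrier G - H" for x
    using inverse_closed_transversal_double_coset[OF assms] that by blast
  thus "subgroup_perfect_code G H"
    using inverse_closed_transversal_of_double_cosets perfect_code_of_inverse_closed_transversal by blast
qed

end
end

section \<open>Cyclic 2-groups\<close>

lemma (in group) cyclic_subgroup_generator:
  assumes "finite (carrier G)" and "subgroup C G" and "cyclic_group (subgroup_generated G C)"
  obtains c where "c \<in> C" "C = range (\<lambda>t::nat. c [^] t)" "ord c = card C"
proof -
  have carrier: "carrier (subgroup_generated G C) = C"
    by (rule subgroup.carrier_subgroup_generated_subgroup[OF assms(2)])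
  obtain c where c: "c \<in> C" "C = range (\<lambda>n::int. c [^]\<^bsub>subgroup_generated G C\<^esub> n)"
    using assms(3) unfolding group.cyclic_group[OF group_subgroup_generated] carrier by blast
  have cG: "c \<in> carrier G" using c(1) subgroup.subset[OF assms(2)] by blast
  have "C = range (\<lambda>n::int. c [^] n)"
    using c int_pow_subgroup_generated[of c C] carrier by simp
  hence generate: "C = generate G {c}"
    using generate_pow[OF cG] by auto
  show ?thesis
  proof
    show "c \<in> C" by (rule c(1))
    show "C = range (\<lambda>t::nat. c [^] t)"
      using generate generate_pow_on_finite_carrier[OF assms(1) cG] by auto
    show "ord c = card C"
      using cyclic_order_is_ord[OF cG] generate cG by (simp add: order_def carrier_subgroup_generated)
  qed
qed

lemma (in group) pow_mem_subgroup_iff_dvd: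
  assumes H: "subgroup H G" and c: "c \<in> carrier G"
    and k: "0 < k" "c [^] k \<in> H" and least: "\<And>t. 0 < t \<Longrightarrow> t < k \<Longrightarrow> c [^] t \<notin> H"
  shows "c [^] (t::nat) \<in> H \<longleftrightarrow> k dvd t"
proof
  have multiple: "c [^] (k * q) \<in> H" for q
    using subgroup_nat_pow_closed[OF H k(2), of q] c by (simp add: nat_pow_pow)
  assume t: "c [^] t \<in> H"
  have "c [^] t = c [^] (k * (t div k)) \<otimes> c [^] (t mod k)"
    using c by (simp add: nat_pow_mult)
  hence "c [^] (t mod k) = inv (c [^] (k * (t div k))) \<otimes> c [^] t"
    using c by simp
  hence "c [^] (t mod k) \<in> H"
    using t multiple H by (simp add: subgroup.m_closed subgroup.m_inv_closed)
  hence "t mod k = 0" using least[of "t mod k"] k(1) by (meson mod_less_divisor neq0_conv)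
  thus "k dvd t" by auto
next
  assume "k dvd t"
  thus "c [^] t \<in> H"
    using subgroup_nat_pow_closed[OF H k(2)] c by (auto simp: nat_pow_pow elim!: dvdE)
qed

lemma (in group) cyclic_two_group_coset_without_involution:
  assumes fin: "finite (carrier G)" and C: "subgroup C G" "card C = 2 ^ m"
    and cyclic: "cyclic_group (subgroup_generated G C)"
    and H: "subgroup H G" "H \<noteq> {\<one>}" "H \<subset> C"
  shows "\<exists>g\<in>C - H. g \<otimes> g \<in> H \<and> (\<forall>h\<in>H. g \<otimes> h \<otimes> inv g \<in> H) \<and>
    (\<forall>h\<in>H. (g \<otimes> h) \<otimes> (g \<otimes> h) \<noteq> \<one>)"
proof -
  obtain c where c: "c \<in> C" "C = range (\<lambda>t::nat. c [^] t)" "ord c = 2 ^ m"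
    using cyclic_subgroup_generator[OF fin C(1) cyclic] C(2) by metis
  have cG: "c \<in> carrier G" using c(1) subgroup.subset[OF C(1)] by blast
  define k where "k = (LEAST t::nat. 0 < t \<and> c [^] t \<in> H)"
  have "0 < ord c \<and> c [^] ord c \<in> H"
    using c(3) pow_ord_eq_1[OF cG] subgroup.one_closed[OF H(1)] by simp
  hence "0 < k \<and> c [^] k \<in> H"
    unfolding k_def by (rule LeastI)
  hence k: "0 < k" "c [^] k \<in> H" by simp_all
  have "c [^] t \<notin> H" if "0 < t" "t < k" for t
    using that not_less_Least unfolding k_def by blast
  note in_H = pow_mem_subgroup_iff_dvd[OF H(1) cG k this]
  have "k dvd 2 ^ m" using in_H pow_ord_eq_1[OF cG] c(3) subgroup.one_closed[OF H(1)] by metis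
  then obtain e where e: "e \<le> m" "k = 2 ^ e" by (auto simp: divides_primepow_nat)
  have "e \<noteq> 0"
  proof
    assume "e = 0"
    hence "c [^] t \<in> H" for t :: nat using in_H e(2) by simp
    thus False using c(2) H(3) by blast
  qed
  have "e \<noteq> m"
  proof
    assume "e = m"
    have "h = \<one>" if h: "h \<in> H" for h
    proof -
      obtain t :: nat where "h = c [^] t" using h H(3) c(2) by blast
      thus ?thesis using h in_H e(2) \<open>e = m\<close> c(3) pow_eq_id[OF cG] by simp
    qed
    thus False using H(2) subgroup.one_closed[OF H(1)] by blast
  qed
  define g where "g = c [^] (2 ^ (e - 1) :: nat)"
  have gC: "g \<in> C" using c(2) unfolding g_def by blast
  have gG: "g \<in> carrier G" using cG unfolding g_def by simp
  have "g \<notin> H"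
    using in_H e(2) \<open>e \<noteq> 0\<close> dvd_power_iff_le[of 2 e "e - 1"] unfolding g_def by simp
  moreover have "g \<otimes> g \<in> H"
  proof -
    have "g \<otimes> g = c [^] (2 ^ (e - 1) + 2 ^ (e - 1) :: nat)"
      using cG unfolding g_def by (simp add: nat_pow_mult)
    also have "(2 ^ (e - 1) + 2 ^ (e - 1) :: nat) = k"
      using e(2) \<open>e \<noteq> 0\<close> by (cases e) auto
    finally show ?thesis using k(2) by simp
  qed
  moreover have "(g \<otimes> h) \<otimes> (g \<otimes> h) \<noteq> \<one>" if h: "h \<in> H" for h
  proof
    assume square: "(g \<otimes> h) \<otimes> (g \<otimes> h) = \<one>"
    have hG: "h \<in> carrier G" using h subgroup.subset[OF H(1)] by blast
    have "g \<otimes> h \<in> C" using gC h H(3) subgroup.m_closed[OF C(1)] by blast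
    then obtain a :: nat where a: "g \<otimes> h = c [^] a" using c(2) by blast
    have "2 ^ m dvd 2 * a"
      using square a cG c(3) pow_eq_id[OF cG, of "a + a"] by (simp add: nat_pow_mult mult_2)
    hence "2 ^ (m - 1) dvd a"
      using \<open>e \<noteq> m\<close> e(1) by (cases m) auto
    moreover have "k dvd 2 ^ (m - 1)"
      using e \<open>e \<noteq> m\<close> by (simp add: le_imp_power_dvd)
    ultimately have "g \<otimes> h \<in> H" using in_H a by (metis dvd_trans)
    hence "g \<otimes> h \<otimes> inv h \<in> H"
      using h H(1) by (simp add: subgroup.m_closed subgroup.m_inv_closed)
    thus False using \<open>g \<notin> H\<close> gG hG by (simp add: m_assoc)
  qed
  moreover have "g \<otimes> h \<otimes> inv g \<in> H" if h: "h \<in> H" for h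
  proof -
    obtain t :: nat where "h = c [^] t" using h H(3) c(2) by blast
    hence "g \<otimes> h = h \<otimes> g" using cG unfolding g_def by (simp add: nat_pow_mult add.commute)
    thus ?thesis using h gG subgroup.subset[OF H(1)] by (simp add: m_assoc subsetD)
  qed
  ultimately show ?thesis using gC by blast
qed

section \<open>Dihedral groups\<close>

text \<open>Trades the truncated subtraction \<open>i + n - j\<close> of the definition for integer arithmetic.\<close>
lemma dihedral_mult:
  assumes "i < n" "j < n"
  shows "(i, e) \<otimes>\<^bsub>dihedral_group n\<^esub> (j, f)
    = (nat ((if e then int i - int j else int i + int j) mod int n), e \<noteq> f)"
proof -
  have "int ((i + n - j) mod n) = (int i - int j) mod int n"
    using assms by (simp add: zmod_int of_nat_diff) (metis add.commute add_diff_eq mod_add_self1)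
  moreover have "int ((i + j) mod n) = (int i + int j) mod int n"
    by (simp add: zmod_int)
  ultimately show ?thesis by (auto simp: dihedral_group_def simp flip: nat_int)
qed

lemma group_dihedral_group:
  assumes "0 < n"
  shows "group (dihedral_group n)"
proof (rule groupI)
  fix x y z
  assume "x \<in> carrier (dihedral_group n)" "y \<in> carrier (dihedral_group n)" "z \<in> carrier (dihedral_group n)"
  then obtain i e j f k g where xyz: "x = (i, e)" "y = (j, f)" "z = (k, g)" and "i < n" "j < n" "k < n"
    by (auto simp: dihedral_group_def)
  thus "x \<otimes>\<^bsub>dihedral_group n\<^esub> y \<otimes>\<^bsub>dihedral_group n\<^esub> z
      = x \<otimes>\<^bsub>dihedral_group n\<^esub> (y \<otimes>\<^bsub>dihedral_group n\<^esub> z)"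
    using assms by (cases e; cases f) (simp_all add: dihedral_mult nat_less_iff mod_simps algebra_simps)
next
  fix x assume "x \<in> carrier (dihedral_group n)"
  then obtain i e where x: "x = (i, e)" "i < n" by (auto simp: dihedral_group_def)
  show "\<exists>y\<in>carrier (dihedral_group n). y \<otimes>\<^bsub>dihedral_group n\<^esub> x = \<one>\<^bsub>dihedral_group n\<^esub>"
    using x assms
    by (intro bexI[of _ "if e then x else ((n - i) mod n, False)"])
      (auto simp: dihedral_group_def mod_add_left_eq)
qed (use assms in \<open>auto simp: dihedral_group_def\<close>)

lemma dihedral_reflection_square:
  "i < n \<Longrightarrow> (i, True) \<otimes>\<^bsub>dihedral_group n\<^esub> (i, True) = \<one>\<^bsub>dihedral_group n\<^esub>"
  by (simp add: dihedral_group_def)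

lemma dihedral_rotations_generate:
  assumes "1 < n"
  shows "generate (dihedral_group n) {(1, False)} = {0..<n} \<times> {False}"
proof -
  interpret D: group "dihedral_group n" using assms by (simp add: group_dihedral_group)
  have pow: "(1, False) [^]\<^bsub>dihedral_group n\<^esub> t = (t mod n, False)" for t :: nat
    using assms by (induction t) (auto simp: dihedral_group_def mod_Suc_eq)
  have "finite (carrier (dihedral_group n))"
    by (simp add: dihedral_group_def)
  moreover have "(1::nat, False) \<in> carrier (dihedral_group n)"
    using assms by (simp add: dihedral_group_def)
  ultimately have "generate (dihedral_group n) {(1, False)}
      = {(1, False) [^]\<^bsub>dihedral_group n\<^esub> t | t. t \<in> (UNIV :: nat set)}"
    by (rule D.generate_pow_on_finite_carrier)
  also have "\<dots> = {(t mod n, False) | t. t \<in> (UNIV :: nat set)}"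
    by (simp only: pow)
  also have "\<dots> = {0..<n} \<times> {False}"
  proof (intro equalityI subsetI)
    fix x assume "x \<in> {0..<n} \<times> {False}"
    then obtain a where "x = (a mod n, False)" by (metis SigmaE atLeastLessThan_iff mod_less singletonD)
    thus "x \<in> {(t mod n, False) | t. t \<in> (UNIV :: nat set)}" by blast
  qed (use assms in auto)
  finally show ?thesis .
qed

lemma (in group) dihedral_subgroup_rotations:
  assumes P: "subgroup P G" and \<phi>: "\<phi> \<in> iso (G\<lparr>carrier := P\<rparr>) (dihedral_group n)" and "1 < n"
  obtains C where "subgroup C G" "C \<subseteq> P" "card C = n" "cyclic_group (subgroup_generated G C)"
    "\<And>x. x \<in> P - C \<Longrightarrow> x \<otimes> x = \<one>"
proof -
  let ?D = "dihedral_group n" and ?P = "G\<lparr>carrier := P\<rparr>"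
  interpret P: group ?P using subgroup_imp_group[OF P] .
  interpret D: group ?D using assms(3) by (simp add: group_dihedral_group)
  define \<psi> where "\<psi> = inv_into P \<phi>"
  have \<psi>: "\<psi> \<in> iso ?D ?P" using P.iso_set_sym[OF \<phi>] unfolding \<psi>_def by simp
  interpret \<phi>: group_hom ?P ?D \<phi> using \<phi> by (simp add: group_hom_def group_hom_axioms_def iso_def)
  interpret \<psi>: group_hom ?D ?P \<psi> using \<psi> by (simp add: group_hom_def group_hom_axioms_def iso_def)
  have rot: "(1::nat, False) \<in> carrier ?D" using assms(3) by (simp add: dihedral_group_def)
  define r where "r = \<psi> (1, False)"
  have rP: "r \<in> P" using \<psi>.hom_closed[OF rot] unfolding r_def by simp
  define C where "C = \<psi> ` ({0..<n} \<times> {False})"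
  have C_generate: "C = generate G {r}"
  proof -
    have "C = generate ?P {r}"
      unfolding C_def r_def using \<psi>.generate_img[of "{(1, False)}"] rot dihedral_rotations_generate[OF assms(3)]
      by simp
    thus ?thesis using generate_consistent[of "{r}" P] rP P by simp
  qed
  show ?thesis
  proof
    show "subgroup C G" unfolding C_generate using rP subgroup.subset[OF P] by (auto intro: generate_is_subgroup)
    show "C \<subseteq> P" using \<psi>.hom_closed unfolding C_def by (auto simp: dihedral_group_def)
    show "card C = n"
    proof -
      have "inj_on \<psi> (carrier ?D)"
        using \<psi> unfolding iso_def bij_betw_def by blast
      hence "inj_on \<psi> ({0..<n} \<times> {False})"
        by (rule inj_on_subset) (auto simp: dihedral_group_def)
      thus ?thesis unfolding C_def by (simp add: card_image card_cartesian_product)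
    qed
    show "cyclic_group (subgroup_generated G C)"
      unfolding C_generate using rP subgroup.subset[OF P]
      by (auto simp: subgroup_generated_generate cyclic_group_generated)
    fix x assume x: "x \<in> P - C"
    obtain i e where \<phi>x: "\<phi> x = (i, e)" "i < n"
      using \<phi>.hom_closed[of x] x by (cases "\<phi> x") (auto simp: dihedral_group_def)
    have "x = \<psi> (\<phi> x)"
      using \<phi> x unfolding \<psi>_def iso_def bij_betw_def by (auto simp: inv_into_f_f)
    have "e"
    proof (rule ccontr)
      assume "\<not> e"
      hence "\<psi> (\<phi> x) \<in> C" using \<phi>x unfolding C_def by simp
      thus False using x \<open>x = \<psi> (\<phi> x)\<close> by simp
    qed
    hence "\<phi> (x \<otimes> x) = \<phi> \<one>"
      using \<phi>.hom_mult[of x x] \<phi>.hom_one x \<phi>x dihedral_reflection_square by simp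
    moreover have "inj_on \<phi> P" using \<phi> unfolding iso_def bij_betw_def by simp
    moreover have "x \<otimes> x \<in> P" using x subgroup.m_closed[OF P] by blast
    ultimately show "x \<otimes> x = \<one>"
      using subgroup.one_closed[OF P] by (auto dest: inj_onD)
  qed
qed

lemma (in group) coset_involution_of_dihedral_sylow:
  assumes fin: "finite (carrier G)" and "2 \<le> n"
    and sylow: "\<forall>P. is_sylow_subgroup 2 G P \<longrightarrow> G\<lparr>carrier := P\<rparr> \<cong> dihedral_group n"
    and H: "subgroup H G" "card H = 2 ^ k"
    and no_cyclic: "\<not> (\<exists>C. is_p_subgroup 2 G C \<and> cyclic_group (subgroup_generated G C) \<and> H \<noteq> {\<one>} \<and> H \<subset> C)"
    and g: "g \<in> carrier G - H" "g \<otimes> g \<in> H" "\<forall>h\<in>H. g \<otimes> h \<otimes> inv g \<in> H"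
  shows "\<exists>h\<in>H. (g \<otimes> h) \<otimes> (g \<otimes> h) = \<one>"
proof (cases "H = {\<one>}")
  case True
  thus ?thesis using g(1,2) by auto
next
  case False
  have gG: "g \<in> carrier G" using g(1) by blast
  have "card (H \<union> (g <# H)) = 2 ^ Suc k"
    using card_Un_l_coset[OF H(1) finite_subset[OF subgroup.subset[OF H(1)] fin]] g(1) H(2) by simp
  hence "is_p_subgroup 2 G (H \<union> (g <# H))"
    unfolding is_p_subgroup_def using subgroup_Un_l_coset[OF H(1) gG g(2,3)] by blast
  then obtain P where P: "is_sylow_subgroup 2 G P" "H \<union> (g <# H) \<subseteq> P"
    using p_subgroup_le_sylow[OF fin] by (metis two_is_prime_nat)
  obtain a where P_sub: "subgroup P G" "card P = 2 ^ a"
    using P(1) unfolding is_sylow_subgroup_def by blast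
  obtain \<phi> where \<phi>: "\<phi> \<in> iso (G\<lparr>carrier := P\<rparr>) (dihedral_group n)"
    using sylow P(1) unfolding is_iso_def by blast
  obtain C where C: "subgroup C G" "C \<subseteq> P" "card C = n" "cyclic_group (subgroup_generated G C)"
    and involution: "\<And>x. x \<in> P - C \<Longrightarrow> x \<otimes> x = \<one>"
    using dihedral_subgroup_rotations[OF P_sub(1) \<phi>] \<open>2 \<le> n\<close> by auto
  have "bij_betw \<phi> P ({0..<n} \<times> (UNIV :: bool set))"
    using \<phi> unfolding iso_def by (simp add: dihedral_group_def)
  hence "card P = card ({0..<n} \<times> (UNIV :: bool set))" by (rule bij_betw_same_card)
  hence "2 ^ a = 2 * n" using P_sub(2) by (simp add: card_cartesian_product)
  hence "card C = 2 ^ (a - 1)" using C(3) by (cases a) auto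
  hence C_2group: "is_p_subgroup 2 G C" unfolding is_p_subgroup_def using C(1) by blast
  have HP: "H \<subseteq> P" and gP: "g \<in> P"
    using P(2) subgroup.one_closed[OF H(1)] gG by (auto simp: l_coset_def)
  show ?thesis
  proof (rule ccontr)
    assume no_involution: "\<not> ?thesis"
    have gh_C: "g \<otimes> h \<in> C" if "h \<in> H" for h
      using that involution[of "g \<otimes> h"] no_involution gP HP subgroup.m_closed[OF P_sub(1)] by blast
    have "g \<in> C" using gh_C[OF subgroup.one_closed[OF H(1)]] gG by simp
    moreover have "H \<subseteq> C"
    proof
      fix h assume h: "h \<in> H"
      have "h = inv g \<otimes> (g \<otimes> h)"
        using gG h subgroup.subset[OF H(1)] by (simp add: subsetD)
      thus "h \<in> C"
        using subgroup.m_closed[OF C(1) subgroup.m_inv_closed[OF C(1)]] \<open>g \<in> C\<close> gh_C[OF h] by metis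
    qed
    ultimately show False
      using no_cyclic C_2group C(4) False g(1) by blast
  qed
qed

theorem corollary3p7:
  fixes G :: "('a, 'b) monoid_scheme" and H :: "'a set"
  assumes "group G" and "finite (carrier G)"
    and "\<exists>n::nat. n \<ge> 2 \<and>
           (\<forall>P. is_sylow_subgroup 2 G P \<longrightarrow> G\<lparr>carrier := P\<rparr> \<cong> dihedral_group n)"
    and "is_p_subgroup 2 G H"
  shows "\<not> subgroup_perfect_code G H \<longleftrightarrow>
         (\<exists>C. is_p_subgroup 2 G C \<and> cyclic_group (subgroup_generated G C) \<and>
              H \<noteq> {\<one>\<^bsub>G\<^esub>} \<and> H \<subset> C)"
proof -
  interpret group G by (rule assms(1))
  obtain n where n: "2 \<le> n" "\<forall>P. is_sylow_subgroup 2 G P \<longrightarrow> G\<lparr>carrier := P\<rparr> \<cong> dihedral_group n"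
    using assms(3) by blast
  obtain k where H: "subgroup H G" "card H = 2 ^ k"
    using assms(4) unfolding is_p_subgroup_def by blast
  note criterion = two_subgroup_perfect_code_iff[OF H(1) assms(2) H(2)]
  show ?thesis
  proof
    assume "\<not> subgroup_perfect_code G H"
    thus "\<exists>C. is_p_subgroup 2 G C \<and> cyclic_group (subgroup_generated G C) \<and> H \<noteq> {\<one>\<^bsub>G\<^esub>} \<and> H \<subset> C"
      using criterion coset_involution_of_dihedral_sylow[OF assms(2) n H] by blast
  next
    assume "\<exists>C. is_p_subgroup 2 G C \<and> cyclic_group (subgroup_generated G C) \<and> H \<noteq> {\<one>\<^bsub>G\<^esub>} \<and> H \<subset> C"
    then obtain C m where C: "subgroup C G" "card C = 2 ^ m" "cyclic_group (subgroup_generated G C)"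
        "H \<noteq> {\<one>\<^bsub>G\<^esub>}" "H \<subset> C"
      unfolding is_p_subgroup_def by blast
    then obtain g where "g \<in> C - H" "g \<otimes>\<^bsub>G\<^esub> g \<in> H"
        "\<forall>h\<in>H. g \<otimes>\<^bsub>G\<^esub> h \<otimes>\<^bsub>G\<^esub> inv\<^bsub>G\<^esub> g \<in> H"
        "\<forall>h\<in>H. (g \<otimes>\<^bsub>G\<^esub> h) \<otimes>\<^bsub>G\<^esub> (g \<otimes>\<^bsub>G\<^esub> h) \<noteq> \<one>\<^bsub>G\<^esub>"
      using cyclic_two_group_coset_without_involution[OF assms(2) C(1-3) H(1) C(4,5)] by blast
    thus "\<not> subgroup_perfect_code G H"
      using criterion subgroup.subset[OF C(1)] by blast
  qed
qed

end
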